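(* There exist real numbers $F_0,F_1,\dots,F_{2n}$ such that for every density operator $\rho$ on $\mathcal{H}_n\otimes\mathcal{H}_n$ whose range is contained in $\mathcal{K}$ (in particular $\mathrm{Tr}\rho=1$), $$\sum_{a\in\{0,1\}^{2n},\,|a|=k}\rho_{aa}=F_k\qquad k=0,1,\dots,2n.$$
   Context: $\mathcal{H}_n$ is the Fock space of $n$ fermionic modes with Majorana operators $c_1,\dots,c_{2n}$ ($c_{2j-1}=a_j+a_j^\dagger$, $c_{2j}=-i(a_j-a_j^\dagger)$). For $x\in\{0,1\}^{2n}$ let $c(x)=c_1^{x_1}\cdots c_{2n}^{x_{2n}}$ and $|x|$ its Hamming weight. Every operator $\rho$ on $\mathcal{H}_n\otimes\mathcal{H}_n$ (ordinary tensor product) expands uniquely as $\rho=\sum_{a,b\in\{0,1\}^{2n}}\rho_{ab}\,c(a)\otimes c(b)$ with $\rho_{ab}=2^{-2n}\mathrm{Tr}(\rho\,c(a)\otimes c(b))$. Let $\Lambda=\sum_{p=1}^{2n}c_p\otimes c_p$ and $\mathcal{K}=\ker\Lambda$. *)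

theory Defs
  imports Complex_Main "Jordan_Normal_Form.Matrix"
begin

text \<open>Fock space of n fermionic modes: C^(2^n), basis vector |s> for s < 2^n, where
  the occupation number of mode j (0-indexed) is bit j of s.\<close>

definition mtrace :: "complex mat \<Rightarrow> complex" where
  "mtrace A = (\<Sum>i<dim_row A. A $$ (i, i))"

definition occ :: "nat \<Rightarrow> nat \<Rightarrow> bool" where
  "occ s j = odd (s div 2 ^ j)"

text \<open>Annihilation operator a_j (Jordan-Wigner sign convention):
  a_j |s> = (-1)^(number of occupied modes i < j) |s - e_j> if mode j occupied, else 0.\<close>
definition annih :: "nat \<Rightarrow> nat \<Rightarrow> complex mat" where
  "annih n j = mat (2 ^ n) (2 ^ n) (\<lambda>(r, s).
     if occ s j \<and> r = s - 2 ^ j then (-1) ^ card {i. i < j \<and> occ s i} else 0)"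

definition adj :: "complex mat \<Rightarrow> complex mat" where
  "adj A = mat (dim_col A) (dim_row A) (\<lambda>(i, j). cnj (A $$ (j, i)))"

text \<open>Majorana operators, 0-indexed p < 2n: c_(2j) = a_j + a_j^dag, c_(2j+1) = -i (a_j - a_j^dag)
  (these are the paper's c_(2j-1), c_(2j) for mode j+1).\<close>
definition majorana :: "nat \<Rightarrow> nat \<Rightarrow> complex mat" where
  "majorana n p = (let j = p div 2 in
     if even p then annih n j + adj (annih n j)
     else (- \<i>) \<cdot>\<^sub>m (annih n j - adj (annih n j)))"

definition cmono :: "nat \<Rightarrow> bool list \<Rightarrow> complex mat" where
  "cmono n x = foldr (\<lambda>p M. (if x ! p then majorana n p else 1\<^sub>m (2 ^ n)) * M)
                 [0..<2 * n] (1\<^sub>m (2 ^ n))"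

definition hamming :: "bool list \<Rightarrow> nat" where
  "hamming x = count_list x True"

definition kron :: "complex mat \<Rightarrow> complex mat \<Rightarrow> complex mat" where
  "kron A B = mat (dim_row A * dim_row B) (dim_col A * dim_col B)
     (\<lambda>(i, j). A $$ (i div dim_row B, j div dim_col B) * B $$ (i mod dim_row B, j mod dim_col B))"

definition Lambda :: "nat \<Rightarrow> complex mat" where
  "Lambda n = foldr (\<lambda>p M. kron (majorana n p) (majorana n p) + M) [0..<2 * n] (0\<^sub>m (4 ^ n) (4 ^ n))"

definition rho_coeff :: "nat \<Rightarrow> complex mat \<Rightarrow> bool list \<Rightarrow> bool list \<Rightarrow> complex" where
  "rho_coeff n \<rho> a b = mtrace (\<rho> * kron (cmono n a) (cmono n b)) / 2 ^ (2 * n)"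

definition density_op :: "nat \<Rightarrow> complex mat \<Rightarrow> bool" where
  "density_op N \<rho> \<longleftrightarrow> \<rho> \<in> carrier_mat N N \<and> adj \<rho> = \<rho> \<and>
     (\<forall>v \<in> carrier_vec N. let q = (\<Sum>i<N. cnj (v $ i) * (\<rho> *\<^sub>v v) $ i) in Im q = 0 \<and> Re q \<ge> 0) \<and>
     mtrace \<rho> = 1"

definition range_op :: "nat \<Rightarrow> complex mat \<Rightarrow> complex vec set" where
  "range_op N A = {A *\<^sub>v v | v. v \<in> carrier_vec N}"

definition kernel_op :: "nat \<Rightarrow> complex mat \<Rightarrow> complex vec set" where
  "kernel_op N A = {v \<in> carrier_vec N. A *\<^sub>v v = 0\<^sub>v (dim_row A)}"

end

theory Submission
  imports Defs
begin

text \<open>Put \<open>Z\<^sub>p = c\<^sub>p \<otimes> c\<^sub>p\<close>. Distinct Majorana operators anticommute and square to the identity,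
  so the \<open>Z\<^sub>p\<close> are commuting involutions, \<open>\<Lambda>\<close> is their sum, and the sum of \<open>c(a) \<otimes> c(a)\<close>
  over \<open>|a| = k\<close> is their \<open>k\<close>-th elementary symmetric polynomial \<open>e\<^sub>k\<close>. For \<open>m\<close> commuting
  involutions with sum \<open>P\<close> one has the Newton-type identity
  \<open>(k + 1) e\<^bsub>k+1\<^esub> = P e\<^sub>k + (k - 1 - m) e\<^bsub>k-1\<^esub>\<close>, so on \<open>ker P\<close> the operator \<open>e\<^sub>k\<close>
  acts as the scalar \<open>[t\<^sup>k] (1 - t\<^sup>2)\<^bsup>m/2\<^esup>\<close>, the same recursion as for \<open>\<Prod>\<^sub>p (1 + t z\<^sub>p)\<close> with
  equally many \<open>z\<^sub>p = 1\<close> and \<open>z\<^sub>p = -1\<close>. A state with range in \<open>\<K>\<close> satisfies \<open>\<Lambda> \<rho> = 0\<close>, hence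
  the sum of \<open>\<rho>\<^sub>a\<^sub>a\<close> over \<open>|a| = k\<close> is \<open>2\<^sup>-\<^sup>2\<^sup>n tr (e\<^sub>k \<rho>) = 2\<^sup>-\<^sup>2\<^sup>n [t\<^sup>k] (1 - t\<^sup>2)\<^sup>n\<close>.\<close>

lemma square_mat_closed [simp]:
  assumes "A \<in> carrier_mat n n" "B \<in> carrier_mat n n"
  shows "A * B \<in> carrier_mat n n" "A + B \<in> carrier_mat n n"
  using assms by auto

lemma smult_mat_cancel:
  fixes c :: "'a :: field"
  assumes "c \<noteq> 0" and eq: "c \<cdot>\<^sub>m A = c \<cdot>\<^sub>m B"
  shows "A = B"
proof (rule eq_matI)
  show dims: "dim_row A = dim_row B" "dim_col A = dim_col B"
    using arg_cong[OF eq, of dim_row] arg_cong[OF eq, of dim_col] by simp_all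
  fix i j assume "i < dim_row B" "j < dim_col B"
  then show "A $$ (i, j) = B $$ (i, j)"
    using arg_cong[OF eq, of "\<lambda>M. M $$ (i, j)"] dims \<open>c \<noteq> 0\<close> by simp
qed

lemma carrier_foldr_mult:
  "(\<And>p. p \<in> set xs \<Longrightarrow> X p \<in> carrier_mat N N) \<Longrightarrow> A \<in> carrier_mat N N \<Longrightarrow>
   foldr (\<lambda>p M. X p * M) xs A \<in> carrier_mat N N"
  by (induction xs) auto

lemma foldr_mult_right:
  assumes "\<And>p. p \<in> set xs \<Longrightarrow> X p \<in> carrier_mat N N" "(B :: 'a :: semiring_1 mat) \<in> carrier_mat N N"
  shows "foldr (\<lambda>p M. X p * M) xs B = foldr (\<lambda>p M. X p * M) xs (1\<^sub>m N) * B"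
  using assms
proof (induction xs)
  case (Cons x xs)
  then have "X x * (foldr (\<lambda>p M. X p * M) xs (1\<^sub>m N) * B)
      = X x * foldr (\<lambda>p M. X p * M) xs (1\<^sub>m N) * B"
    by (simp add: assoc_mult_mat[of _ N N _ N _ N] carrier_foldr_mult)
  then show ?case
    using Cons by simp
qed simp

lemma mtrace_mult:
  "A \<in> carrier_mat N N \<Longrightarrow> B \<in> carrier_mat N N \<Longrightarrow>
   mtrace (A * B) = (\<Sum>i<N. \<Sum>l<N. A $$ (i, l) * B $$ (l, i))"
  by (auto simp: mtrace_def scalar_prod_def atLeast0LessThan intro!: sum.cong)

lemma mtrace_mult_comm:
  assumes "A \<in> carrier_mat N N" "B \<in> carrier_mat N N"
  shows "mtrace (A * B) = mtrace (B * A)"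
proof -
  have "mtrace (A * B) = (\<Sum>l<N. \<Sum>i<N. A $$ (i, l) * B $$ (l, i))"
    using assms by (simp add: mtrace_mult) (rule sum.swap)
  also have "\<dots> = mtrace (B * A)"
    using assms by (simp add: mtrace_mult mult.commute)
  finally show ?thesis .
qed

lemma mtrace_smult: "A \<in> carrier_mat N N \<Longrightarrow> mtrace (c \<cdot>\<^sub>m A) = c * mtrace A"
  by (auto simp: mtrace_def sum_distrib_left)

lemma hamming_snoc: "hamming (a @ [b]) = hamming a + (if b then 1 else 0)"
  by (simp add: hamming_def)

lemma bool_lists_Suc_by_hamming:
  "{a. length a = Suc m \<and> int (hamming a) = k} =
   (\<lambda>a. a @ [False]) ` {a. length a = m \<and> int (hamming a) = k} \<union>
   (\<lambda>a. a @ [True]) ` {a. length a = m \<and> int (hamming a) = k - 1}"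
proof (intro equalityI subsetI)
  fix x assume "x \<in> {a. length a = Suc m \<and> int (hamming a) = k}"
  moreover obtain a b where "x = a @ [b]"
    using calculation by (metis (mono_tags) length_Suc_conv_rev mem_Collect_eq)
  ultimately show "x \<in> (\<lambda>a. a @ [False]) ` {a. length a = m \<and> int (hamming a) = k} \<union>
      (\<lambda>a. a @ [True]) ` {a. length a = m \<and> int (hamming a) = k - 1}"
    by (cases b) (auto simp: hamming_snoc)
qed (auto simp: hamming_snoc)

lemma finite_bool_lists_length: "finite {a :: bool list. length a = m \<and> P a}"
  by (rule finite_subset[OF _ finite_lists_length_eq[of "UNIV :: bool set" m]]) auto

section \<open>Elementary symmetric polynomials in commuting involutions\<close>

text \<open>The elementary symmetric polynomials \<open>e\<^sub>k(Z\<^sub>0, \<dots>, Z\<^bsub>m-1\<^esub>)\<close> are indexed by integers, so that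
  \<open>e\<^sub>k = 0\<close> for \<open>k < 0\<close> and the recurrences below need no case distinction at \<open>k = 0\<close>.\<close>

fun elem_sym_mat :: "nat \<Rightarrow> (nat \<Rightarrow> complex mat) \<Rightarrow> nat \<Rightarrow> int \<Rightarrow> complex mat" where
  "elem_sym_mat D Z 0 k = (if k = 0 then 1\<^sub>m D else 0\<^sub>m D D)"
| "elem_sym_mat D Z (Suc m) k = elem_sym_mat D Z m k + elem_sym_mat D Z m (k - 1) * Z m"

fun family_sum_mat :: "nat \<Rightarrow> (nat \<Rightarrow> complex mat) \<Rightarrow> nat \<Rightarrow> complex mat" where
  "family_sum_mat D Z 0 = 0\<^sub>m D D"
| "family_sum_mat D Z (Suc m) = family_sum_mat D Z m + Z m"

definition subset_prod_mat :: "nat \<Rightarrow> (nat \<Rightarrow> complex mat) \<Rightarrow> nat \<Rightarrow> bool list \<Rightarrow> complex mat" where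
  "subset_prod_mat D Z m a = foldr (\<lambda>p M. (if a ! p then Z p else 1\<^sub>m D) * M) [0..<m] (1\<^sub>m D)"

text \<open>The coefficient of \<open>t\<^sup>k\<close> in \<open>(1 - t\<^sup>2)\<^sup>n\<close>.\<close>

definition kernel_elem_sym :: "nat \<Rightarrow> nat \<Rightarrow> real" where
  "kernel_elem_sym n k = (if even k then (-1) ^ (k div 2) * real (n choose (k div 2)) else 0)"

lemma kernel_elem_sym_recurrence:
  "real (k + 2) * kernel_elem_sym n (k + 2) = (real k - 2 * real n) * kernel_elem_sym n k"
proof (cases "even k")
  case True
  then obtain j where k: "k = 2 * j" by blast
  have binom: "real (Suc j) * real (n choose Suc j) = (real n - real j) * real (n choose j)"
  proof (cases "j \<le> n")
    case True
    have "Suc j * (n choose Suc j) = (n - j) * (n choose j)"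
      by (simp only: binomial_absorption binomial_absorb_comp)
    then have "real (Suc j * (n choose Suc j)) = real ((n - j) * (n choose j))"
      by (rule arg_cong)
    then show ?thesis
      using True by (simp add: of_nat_diff algebra_simps)
  next
    case False
    then show ?thesis by (simp add: binomial_eq_0)
  qed
  have "real (k + 2) * kernel_elem_sym n (k + 2)
      = - 2 * (-1) ^ j * (real (Suc j) * real (n choose Suc j))"
    by (simp add: kernel_elem_sym_def k algebra_simps)
  also have "\<dots> = - 2 * (-1) ^ j * ((real n - real j) * real (n choose j))"
    by (simp only: binom)
  also have "\<dots> = (real k - 2 * real n) * kernel_elem_sym n k"
    by (simp add: kernel_elem_sym_def k algebra_simps)
  finally show ?thesis .
qed (simp add: kernel_elem_sym_def)

locale commuting_involutions =
  fixes D :: nat and Z :: "nat \<Rightarrow> complex mat"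
  assumes carrier_Z [simp]: "Z p \<in> carrier_mat D D"
    and Z_comm: "Z p * Z q = Z q * Z p"
    and Z_square: "Z p * Z p = 1\<^sub>m D"
begin

abbreviation "e \<equiv> elem_sym_mat D Z"
abbreviation "P \<equiv> family_sum_mat D Z"

lemma dim_Z [simp]: "dim_row (Z p) = D" "dim_col (Z p) = D"
  using carrier_Z[of p] unfolding carrier_mat_def by auto

lemma carrier_elem_sym [simp]: "e m k \<in> carrier_mat D D"
  by (induction m arbitrary: k) (auto intro!: add_carrier_mat mult_carrier_mat)

lemma dim_elem_sym [simp]: "dim_row (e m k) = D" "dim_col (e m k) = D"
  using carrier_elem_sym[of m k] unfolding carrier_mat_def by auto

lemma carrier_sum [simp]: "P m \<in> carrier_mat D D"
  by (induction m) auto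

lemma dim_sum [simp]: "dim_row (P m) = D" "dim_col (P m) = D"
  using carrier_sum[of m] unfolding carrier_mat_def by auto

lemma elem_sym_neg: "k < 0 \<Longrightarrow> e m k = 0\<^sub>m D D"
  by (induction m arbitrary: k) auto

lemma elem_sym_0 [simp]: "e m 0 = 1\<^sub>m D"
  by (induction m) (auto simp: elem_sym_neg)

lemma elem_sym_1: "e m 1 = P m"
  by (induction m) auto

lemma commute_with_sum:
  assumes "A \<in> carrier_mat D D" "\<And>q. Z q * A = A * Z q"
  shows "P m * A = A * P m"
  by (induction m) (use assms in \<open>simp_all add: add_mult_distrib_mat[of _ D D _ _ D] mult_add_distrib_mat[of _ D D _ D]\<close>)

lemma Z_elem_sym_comm: "Z q * e m k = e m k * Z q"
proof (induction m arbitrary: k)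
  case (Suc m)
  have "Z q * (e m (k - 1) * Z m) = (Z q * e m (k - 1)) * Z m"
    by (simp add: assoc_mult_mat[of _ D D _ D _ D])
  also have "\<dots> = e m (k - 1) * (Z q * Z m)"
    by (simp add: Suc.IH assoc_mult_mat[of _ D D _ D _ D])
  also have "\<dots> = e m (k - 1) * Z m * Z q"
    by (simp add: Z_comm assoc_mult_mat[of _ D D _ D _ D])
  finally have "Z q * (e m (k - 1) * Z m) = e m (k - 1) * Z m * Z q" .
  then show ?case
    by (simp add: mult_add_distrib_mat[of _ D D _ D] add_mult_distrib_mat[of _ D D _ _ D] Suc.IH)
qed simp

lemma sum_elem_sym_comm: "P m' * e m k = e m k * P m'"
  by (rule commute_with_sum) (simp_all add: Z_elem_sym_comm)

lemma elem_sym_recurrence: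
  "of_int (k + 1) \<cdot>\<^sub>m e m (k + 1) = P m * e m k + of_int (k - 1 - int m) \<cdot>\<^sub>m e m (k - 1)"
proof (induction m arbitrary: k)
  case 0
  have "complex_of_int k + 1 = 0" if "k + 1 = 0"
    using that by (metis of_int_0 of_int_1 of_int_add)
  then show ?case by (intro eq_matI) auto
next
  case (Suc m)
  let ?z = "Z m"
  have expand: "(P m + ?z) * (e m k + e m (k - 1) * ?z)
      = P m * e m k + e m k * ?z + (P m * (e m (k - 1) * ?z) + e m (k - 1))"
  proof -
    have "?z * (e m (k - 1) * ?z) = e m (k - 1)"
      by (simp add: assoc_mult_mat[of _ D D _ D _ D, symmetric] Z_elem_sym_comm)
         (simp add: assoc_mult_mat[of _ D D _ D _ D] Z_square)
    then show ?thesis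
      by (simp add: add_mult_distrib_mat[of _ D D _ _ D] mult_add_distrib_mat[of _ D D _ D]
          Z_elem_sym_comm)
  qed
  have shifted: "of_int k \<cdot>\<^sub>m (e m k * ?z)
      = P m * (e m (k - 1) * ?z) + of_int (k - 2 - int m) \<cdot>\<^sub>m (e m (k - 2) * ?z)"
    using arg_cong[OF Suc.IH[of "k - 1"], of "\<lambda>A. A * ?z"]
    by (simp add: add_mult_distrib_mat[of _ D D _ _ D] mult_smult_assoc_mat[of _ D D _ D]
        assoc_mult_mat[of _ D D _ D _ D])
  show ?case
  proof (rule eq_matI)
    fix i j assume "i < dim_row (P (Suc m) * e (Suc m) k
      + of_int (k - 1 - int (Suc m)) \<cdot>\<^sub>m e (Suc m) (k - 1))"
      "j < dim_col (P (Suc m) * e (Suc m) k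
      + of_int (k - 1 - int (Suc m)) \<cdot>\<^sub>m e (Suc m) (k - 1))"
    then have ij: "i < D" "j < D" by auto
    note entry = arg_cong[where f = "\<lambda>A. A $$ (i, j)"]
    show "(of_int (k + 1) \<cdot>\<^sub>m e (Suc m) (k + 1)) $$ (i, j) =
      (P (Suc m) * e (Suc m) k + of_int (k - 1 - int (Suc m)) \<cdot>\<^sub>m e (Suc m) (k - 1)) $$ (i, j)"
      using entry[OF Suc.IH[of k]] entry[OF shifted] entry[OF expand] ij
      by (simp del: index_mult_mat(1)) (simp add: algebra_simps)
  qed auto
qed

abbreviation "T \<equiv> subset_prod_mat D Z"

lemma carrier_subset_prod [simp]: "T m a \<in> carrier_mat D D"
  unfolding subset_prod_mat_def by (rule carrier_foldr_mult) auto

lemma dim_subset_prod [simp]: "dim_row (T m a) = D" "dim_col (T m a) = D"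
  using carrier_subset_prod[of m a] unfolding carrier_mat_def by auto

lemma subset_prod_snoc:
  assumes "length a = m"
  shows "T (Suc m) (a @ [b]) = T m a * (if b then Z m else 1\<^sub>m D)"
proof -
  define X where "X = (if b then Z m else 1\<^sub>m D)"
  define f where "f = (\<lambda>p M. (if (a @ [b]) ! p then Z p else 1\<^sub>m D) * M)"
  have "T (Suc m) (a @ [b]) = foldr f [0..<m] (f m (1\<^sub>m D))"
    unfolding subset_prod_mat_def f_def[symmetric] by simp
  also have "f m (1\<^sub>m D) = X"
    using assms by (simp add: f_def X_def nth_append)
  also have "foldr f [0..<m] X = foldr (\<lambda>p M. (if a ! p then Z p else 1\<^sub>m D) * M) [0..<m] X"
    using assms by (intro foldr_cong) (auto simp: f_def nth_append)
  also have "\<dots> = T m a * X"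
    unfolding subset_prod_mat_def by (rule foldr_mult_right) (auto simp: X_def)
  finally show ?thesis
    unfolding X_def .
qed

lemma sum_subset_prod_eq_elem_sym:
  assumes "i < D" "j < D"
  shows "(\<Sum>a \<in> {a. length a = m \<and> int (hamming a) = k}. T m a $$ (i, j)) = e m k $$ (i, j)"
  using assms
proof (induction m arbitrary: k i j)
  case 0
  have "{a. length a = 0 \<and> int (hamming a) = k} = (if k = 0 then {[]} else {})"
    by (auto simp: hamming_def)
  then show ?case
    using 0 by (simp add: subset_prod_mat_def)
next
  case (Suc m)
  let ?A = "\<lambda>k. {a. length a = m \<and> int (hamming a) = k}"
  have "(\<Sum>a \<in> {a. length a = Suc m \<and> int (hamming a) = k}. T (Suc m) a $$ (i, j))
      = (\<Sum>a \<in> ?A k. T (Suc m) (a @ [False]) $$ (i, j))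
        + (\<Sum>a \<in> ?A (k - 1). T (Suc m) (a @ [True]) $$ (i, j))"
    unfolding bool_lists_Suc_by_hamming
    by (subst sum.union_disjoint) (auto simp: finite_bool_lists_length sum.reindex inj_on_def)
  also have "(\<Sum>a \<in> ?A k. T (Suc m) (a @ [False]) $$ (i, j)) = e m k $$ (i, j)"
    using Suc by (simp add: subset_prod_snoc right_mult_one_mat[OF carrier_subset_prod])
  also have "(\<Sum>a \<in> ?A (k - 1). T (Suc m) (a @ [True]) $$ (i, j))
      = (\<Sum>l \<in> {0..<D}. (\<Sum>a \<in> ?A (k - 1). T m a $$ (i, l)) * Z m $$ (l, j))"
    using Suc.prems
    by (simp add: subset_prod_snoc scalar_prod_def sum_distrib_right sum.swap[of _ "?A (k - 1)"])
  also have "\<dots> = (e m (k - 1) * Z m) $$ (i, j)"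
    using Suc by (simp add: scalar_prod_def)
  finally show ?case
    using Suc.prems by simp
qed

lemma sum_mtrace_subset_prod:
  assumes "A \<in> carrier_mat D D"
  shows "(\<Sum>a \<in> {a. length a = m \<and> int (hamming a) = k}. mtrace (A * T m a)) = mtrace (A * e m k)"
proof -
  let ?S = "{a. length a = m \<and> int (hamming a) = k}"
  have "(\<Sum>a \<in> ?S. mtrace (A * T m a))
      = (\<Sum>i<D. \<Sum>l<D. A $$ (i, l) * (\<Sum>a \<in> ?S. T m a $$ (l, i)))"
    using assms by (simp add: mtrace_mult sum_distrib_left sum.swap[of _ ?S])
  also have "\<dots> = mtrace (A * e m k)"
    using assms by (simp add: mtrace_mult sum_subset_prod_eq_elem_sym)
  finally show ?thesis .
qed

lemma elem_sym_on_kernel: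
  assumes M: "M \<in> carrier_mat D D" and kernel: "P (2 * n) * M = 0\<^sub>m D D"
  shows "e (2 * n) (int k) * M = complex_of_real (kernel_elem_sym n k) \<cdot>\<^sub>m M"
proof (induction k rule: nat_induct2)
  case 0
  show ?case using M by (simp add: kernel_elem_sym_def) (auto intro!: eq_matI)
next
  case 1
  show ?case using M kernel by (simp add: kernel_elem_sym_def elem_sym_1) (auto intro!: eq_matI)
next
  case (step k)
  let ?e = "e (2 * n)" and ?c = "\<lambda>k. complex_of_real (kernel_elem_sym n k)"
  have idx: "int k + 1 + 1 = int k + 2" "int k + 1 - 1 = int k"
    "int k + 1 - 1 - int (2 * n) = int k - int (2 * n)" "int (k + 2) = int k + 2"
    by simp_all
  have rec: "of_int (int k + 2) \<cdot>\<^sub>m ?e (int k + 2)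
      = P (2 * n) * ?e (int k + 1) + of_int (int k - int (2 * n)) \<cdot>\<^sub>m ?e (int k)"
    using elem_sym_recurrence[of "int k + 1" "2 * n"] unfolding idx .
  have "P (2 * n) * ?e (int k + 1) * M = ?e (int k + 1) * (P (2 * n) * M)"
    using M by (simp add: sum_elem_sym_comm assoc_mult_mat[of _ D D _ D _ D])
  then have "of_int (int k + 2) \<cdot>\<^sub>m (?e (int k + 2) * M)
      = of_int (int k - int (2 * n)) \<cdot>\<^sub>m (?c k \<cdot>\<^sub>m M)"
    using arg_cong[OF rec, of "\<lambda>A. A * M"] M kernel step
    by (simp add: add_mult_distrib_mat[of _ D D _ _ D] mult_smult_assoc_mat[of _ D D _ D])
  also have "\<dots> = of_int (int k + 2) \<cdot>\<^sub>m (?c (k + 2) \<cdot>\<^sub>m M)"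
  proof -
    have "of_int (int k - int (2 * n)) * ?c k = of_int (int k + 2) * ?c (k + 2)"
      using arg_cong[OF kernel_elem_sym_recurrence[of k n], of complex_of_real] by (simp add: add_ac)
    then show ?thesis
      by (auto intro!: eq_matI simp flip: mult.assoc)
  qed
  finally have scaled: "of_int (int k + 2) \<cdot>\<^sub>m (?e (int k + 2) * M)
      = of_int (int k + 2) \<cdot>\<^sub>m (?c (k + 2) \<cdot>\<^sub>m M)" .
  have "(of_int (int k + 2) :: complex) \<noteq> 0"
    by (simp only: idx(4)[symmetric] of_int_of_nat_eq of_nat_eq_0_iff)
  from smult_mat_cancel[OF this scaled] show ?case
    unfolding idx .
qed

end

section \<open>Majorana operators as monomial matrices\<close>

definition monomial_mat :: "nat \<Rightarrow> (nat \<Rightarrow> nat) \<Rightarrow> (nat \<Rightarrow> 'a :: semiring_1) \<Rightarrow> 'a mat" where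
  "monomial_mat N f w = mat N N (\<lambda>(r, s). if r = f s then w s else 0)"

lemma carrier_monomial_mat [simp]: "monomial_mat N f w \<in> carrier_mat N N"
  by (simp add: monomial_mat_def)

lemma dim_monomial_mat [simp]: "dim_row (monomial_mat N f w) = N" "dim_col (monomial_mat N f w) = N"
  by (simp_all add: monomial_mat_def)

lemma index_monomial_mat [simp]:
  "r < N \<Longrightarrow> s < N \<Longrightarrow> monomial_mat N f w $$ (r, s) = (if r = f s then w s else 0)"
  by (simp add: monomial_mat_def)

lemma monomial_mat_mult:
  assumes "\<And>s. s < N \<Longrightarrow> g s < N"
  shows "monomial_mat N f w * monomial_mat N g u = monomial_mat N (f \<circ> g) (\<lambda>s. w (g s) * u s)"
proof (rule eq_matI)
  fix i j assume "i < dim_row (monomial_mat N (f \<circ> g) (\<lambda>s. w (g s) * u s))"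
    "j < dim_col (monomial_mat N (f \<circ> g) (\<lambda>s. w (g s) * u s))"
  then have i: "i < N" and j: "j < N" by auto
  have "(monomial_mat N f w * monomial_mat N g u) $$ (i, j)
      = (\<Sum>l\<in>{0..<N}. (if i = f l then w l else 0) * (if l = g j then u j else 0))"
    using i j by (simp add: scalar_prod_def)
  also have "\<dots> = (\<Sum>l\<in>{0..<N}. if l = g j then (if i = f l then w l else 0) * u j else 0)"
    by (rule sum.cong) auto
  also have "\<dots> = (if i = f (g j) then w (g j) else 0) * u j"
    using assms[OF j] by simp
  finally show "(monomial_mat N f w * monomial_mat N g u) $$ (i, j)
      = monomial_mat N (f \<circ> g) (\<lambda>s. w (g s) * u s) $$ (i, j)"
    using i j by simp
qed auto

lemma monomial_mat_cong:
  "(\<And>s. s < N \<Longrightarrow> f s = g s) \<Longrightarrow> (\<And>s. s < N \<Longrightarrow> w s = u s) \<Longrightarrow>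
   monomial_mat N f w = monomial_mat N g u"
  by (rule eq_matI) auto

lemma smult_monomial_mat: "c \<cdot>\<^sub>m monomial_mat N f w = monomial_mat N f (\<lambda>s. c * w s)"
  by (rule eq_matI) auto

lemma monomial_mat_id: "monomial_mat N (\<lambda>s. s) (\<lambda>_. 1) = 1\<^sub>m N"
  by (rule eq_matI) auto

lemma bit_flip_bit: "bit (flip_bit k s) i = (if i = k then \<not> bit (s :: nat) i else bit s i)"
  by (auto simp: bit_flip_bit_iff)

lemma flip_bit_flip_bit [simp]: "flip_bit k (flip_bit k (s :: nat)) = s"
  by (rule bit_eqI) (auto simp: bit_flip_bit)

lemma flip_bit_commute: "flip_bit k (flip_bit j (s :: nat)) = flip_bit j (flip_bit k s)"
  by (rule bit_eqI) (auto simp: bit_flip_bit)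

lemma flip_bit_less_power:
  assumes "s < 2 ^ n" "j < n"
  shows "flip_bit j (s :: nat) < 2 ^ n"
proof -
  have "take_bit n s = s"
    using assms by (simp add: take_bit_nat_eq_self_iff)
  then have "take_bit n (flip_bit j s) = flip_bit j s"
    using assms by (simp add: take_bit_flip_bit_eq)
  then show ?thesis by (simp add: take_bit_nat_eq_self_iff)
qed

lemma flip_bit_nat_eq: "flip_bit j (s :: nat) = (if bit s j then s - 2 ^ j else s + 2 ^ j)"
proof (cases "bit s j")
  case True
  have "set_bit j (flip_bit j s) = s"
    using True by (intro bit_eqI) (auto simp: bit_flip_bit bit_set_bit_iff)
  moreover have "set_bit j (flip_bit j s) = flip_bit j s + 2 ^ j"
    using True by (simp add: set_bit_eq bit_flip_bit)
  ultimately show ?thesis using True by simp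
qed (simp add: flip_bit_eq_if set_bit_eq)

definition jw_sign :: "nat \<Rightarrow> nat \<Rightarrow> complex" where
  "jw_sign j s = (-1) ^ card {i. i < j \<and> bit s i}"

definition majorana_weight :: "nat \<Rightarrow> nat \<Rightarrow> complex" where
  "majorana_weight p s = (if even p then jw_sign (p div 2) s
     else - \<i> * jw_sign (p div 2) s * (if bit s (p div 2) then 1 else -1))"

lemma jw_sign_flip_bit: "jw_sign j (flip_bit k s) = (if k < j then -1 else 1) * jw_sign j s"
proof (cases "k < j")
  case False
  then have "{i. i < j \<and> bit (flip_bit k s) i} = {i. i < j \<and> bit s i}"
    by (auto simp: bit_flip_bit)
  then show ?thesis using False by (simp add: jw_sign_def)
next
  case less: True
  let ?A = "{i. i < j \<and> bit s i}" and ?A' = "{i. i < j \<and> bit (flip_bit k s) i}"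
  show ?thesis
  proof (cases "bit s k")
    case False
    then have "?A' = insert k ?A" "k \<notin> ?A"
      using less by (auto simp: bit_flip_bit)
    then show ?thesis using less by (simp add: jw_sign_def)
  next
    case True
    then have "?A = insert k ?A'" "k \<notin> ?A'"
      using less by (auto simp: bit_flip_bit)
    then show ?thesis using less by (simp add: jw_sign_def)
  qed
qed

lemma majorana_weight_flip_bit:
  "majorana_weight p (flip_bit k s) = (if k = p div 2 then (if even p then 1 else -1)
     else if k < p div 2 then -1 else 1) * majorana_weight p s"
  by (auto simp: majorana_weight_def jw_sign_flip_bit bit_flip_bit)

lemma majorana_weight_square: "majorana_weight p (flip_bit (p div 2) s) * majorana_weight p s = 1"
proof -
  have "jw_sign j s * jw_sign j s = 1" for j
    by (simp add: jw_sign_def flip: power_add)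
  then have "majorana_weight p s * majorana_weight p s = (if even p then 1 else -1)"
    by (auto simp: majorana_weight_def algebra_simps)
  then show ?thesis by (simp add: majorana_weight_flip_bit)
qed

lemma majorana_weight_anticomm:
  assumes "p \<noteq> q"
  shows "majorana_weight p (flip_bit (q div 2) s) * majorana_weight q s
    = - (majorana_weight q (flip_bit (p div 2) s) * majorana_weight p s)"
proof (cases "p div 2 = q div 2")
  case True
  then have "even p \<noteq> even q"
    using assms by (metis dvd_mult_div_cancel odd_two_times_div_two_succ)
  then show ?thesis using True by (auto simp: majorana_weight_flip_bit)
qed (auto simp: majorana_weight_flip_bit)

lemma dim_annih [simp]: "dim_row (annih n j) = 2 ^ n" "dim_col (annih n j) = 2 ^ n"
  by (simp_all add: annih_def)

lemma dim_adj [simp]: "dim_row (adj A) = dim_col A" "dim_col (adj A) = dim_row A"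
  by (simp_all add: adj_def)

lemma index_annih:
  "r < 2 ^ n \<Longrightarrow> s < 2 ^ n \<Longrightarrow>
   annih n j $$ (r, s) = (if bit s j \<and> r = flip_bit j s then jw_sign j s else 0)"
  by (simp add: annih_def occ_def bit_iff_odd jw_sign_def flip_bit_nat_eq)

lemma index_adj_annih:
  assumes "r < 2 ^ n" "s < 2 ^ n"
  shows "adj (annih n j) $$ (r, s) = (if \<not> bit s j \<and> r = flip_bit j s then jw_sign j s else 0)"
proof -
  have swap: "(bit r j \<and> s = flip_bit j r) = (\<not> bit s j \<and> r = flip_bit j s)"
    by (auto simp: bit_flip_bit)
  have "adj (annih n j) $$ (r, s) = cnj (annih n j $$ (s, r))"
    using assms by (simp add: adj_def)
  also have "\<dots> = cnj (if \<not> bit s j \<and> r = flip_bit j s then jw_sign j r else 0)"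
    using assms by (simp add: index_annih swap)
  also have "\<dots> = (if \<not> bit s j \<and> r = flip_bit j s then jw_sign j s else 0)"
    by (auto simp: jw_sign_flip_bit) (simp add: jw_sign_def)
  finally show ?thesis .
qed

lemma majorana_monomial:
  assumes "p < 2 * n"
  shows "majorana n p = monomial_mat (2 ^ n) (flip_bit (p div 2)) (majorana_weight p)"
proof (rule eq_matI)
  fix r s assume "r < dim_row (monomial_mat (2 ^ n) (flip_bit (p div 2)) (majorana_weight p))"
    "s < dim_col (monomial_mat (2 ^ n) (flip_bit (p div 2)) (majorana_weight p))"
  then show "majorana n p $$ (r, s) = monomial_mat (2 ^ n) (flip_bit (p div 2)) (majorana_weight p) $$ (r, s)"
    by (auto simp: majorana_def Let_def index_annih index_adj_annih majorana_weight_def)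
qed (auto simp: majorana_def Let_def)

lemma carrier_majorana [simp]: "p < 2 * n \<Longrightarrow> majorana n p \<in> carrier_mat (2 ^ n) (2 ^ n)"
  by (simp add: majorana_monomial)

lemma majorana_square:
  assumes "p < 2 * n"
  shows "majorana n p * majorana n p = 1\<^sub>m (2 ^ n)"
proof -
  have "majorana n p * majorana n p = monomial_mat (2 ^ n) (flip_bit (p div 2) \<circ> flip_bit (p div 2))
      (\<lambda>s. majorana_weight p (flip_bit (p div 2) s) * majorana_weight p s)"
    unfolding majorana_monomial[OF assms] using assms
    by (intro monomial_mat_mult) (simp add: flip_bit_less_power)
  also have "\<dots> = monomial_mat (2 ^ n) (\<lambda>s. s) (\<lambda>_. 1)"
    by (rule monomial_mat_cong) (simp_all add: majorana_weight_square)
  finally show ?thesis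
    by (simp add: monomial_mat_id)
qed

lemma majorana_anticomm:
  assumes "p < 2 * n" "q < 2 * n" "p \<noteq> q"
  shows "majorana n p * majorana n q = (-1) \<cdot>\<^sub>m (majorana n q * majorana n p)"
proof -
  have less: "p div 2 < n" "q div 2 < n"
    using assms by auto
  have "majorana n p * majorana n q = monomial_mat (2 ^ n) (flip_bit (p div 2) \<circ> flip_bit (q div 2))
      (\<lambda>s. majorana_weight p (flip_bit (q div 2) s) * majorana_weight q s)"
    unfolding majorana_monomial[OF assms(1)] majorana_monomial[OF assms(2)]
    by (rule monomial_mat_mult) (simp add: flip_bit_less_power less)
  also have "\<dots> = monomial_mat (2 ^ n) (flip_bit (q div 2) \<circ> flip_bit (p div 2))
      (\<lambda>s. -1 * (majorana_weight q (flip_bit (p div 2) s) * majorana_weight p s))"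
    by (rule monomial_mat_cong) (auto simp: majorana_weight_anticomm[OF assms(3)] flip_bit_commute)
  also have "\<dots> = (-1) \<cdot>\<^sub>m (majorana n q * majorana n p)"
    unfolding majorana_monomial[OF assms(1)] majorana_monomial[OF assms(2)] smult_monomial_mat
    by (subst monomial_mat_mult) (auto simp: flip_bit_less_power less)
  finally show ?thesis .
qed

section \<open>Kronecker products\<close>

lemma sum_div_mod_eq_double_sum:
  fixes g :: "nat \<Rightarrow> nat \<Rightarrow> 'a :: comm_monoid_add"
  shows "(\<Sum>l\<in>{0..<a * b}. g (l div b) (l mod b)) = (\<Sum>x\<in>{0..<a}. \<Sum>y\<in>{0..<b}. g x y)"
proof (induction a)
  case (Suc a)
  have "(\<Sum>l\<in>{0..<Suc a * b}. g (l div b) (l mod b))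
      = (\<Sum>l\<in>{0..<a * b}. g (l div b) (l mod b)) + (\<Sum>l\<in>{a * b..<a * b + b}. g (l div b) (l mod b))"
    by (subst sum.atLeastLessThan_concat[symmetric, of _ "a * b"]) (auto simp: add.commute)
  also have "(\<Sum>l\<in>{a * b..<a * b + b}. g (l div b) (l mod b))
      = (\<Sum>y\<in>{0..<b}. g ((y + a * b) div b) ((y + a * b) mod b))"
    using sum.shift_bounds_nat_ivl[of "\<lambda>l. g (l div b) (l mod b)" 0 "a * b" b] by (simp add: add.commute)
  also have "\<dots> = (\<Sum>y\<in>{0..<b}. g a y)"
    by (rule sum.cong) auto
  finally show ?case
    using Suc by simp
qed simp

lemma kron_index_bounds:
  fixes i N :: nat
  assumes "i < N * N"
  shows "i div N < N" "i mod N < N"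
proof -
  have "0 < N"
    using assms by (cases N) auto
  then show "i div N < N" "i mod N < N"
    using assms by (simp_all add: less_mult_imp_div_less)
qed

lemma carrier_kron [simp]:
  "A \<in> carrier_mat N N \<Longrightarrow> B \<in> carrier_mat N N \<Longrightarrow> kron A B \<in> carrier_mat (N * N) (N * N)"
  by (auto simp: kron_def)

lemma kron_mult:
  assumes "A \<in> carrier_mat N N" "B \<in> carrier_mat N N" "C \<in> carrier_mat N N" "E \<in> carrier_mat N N"
  shows "kron A C * kron B E = kron (A * B) (C * E)"
proof (rule eq_matI)
  fix i j assume "i < dim_row (kron (A * B) (C * E))" "j < dim_col (kron (A * B) (C * E))"
  then have i: "i < N * N" and j: "j < N * N"
    using assms by (auto simp: kron_def)
  have "(kron A C * kron B E) $$ (i, j) = (\<Sum>l\<in>{0..<N * N}.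
      (A $$ (i div N, l div N) * C $$ (i mod N, l mod N)) * (B $$ (l div N, j div N) * E $$ (l mod N, j mod N)))"
    using i j assms by (auto simp: kron_def scalar_prod_def intro!: sum.cong)
  also have "\<dots> = (\<Sum>x\<in>{0..<N}. \<Sum>y\<in>{0..<N}.
      (A $$ (i div N, x) * C $$ (i mod N, y)) * (B $$ (x, j div N) * E $$ (y, j mod N)))"
    by (rule sum_div_mod_eq_double_sum)
  also have "\<dots> = (\<Sum>x\<in>{0..<N}. A $$ (i div N, x) * B $$ (x, j div N))
      * (\<Sum>y\<in>{0..<N}. C $$ (i mod N, y) * E $$ (y, j mod N))"
    by (simp add: sum_product algebra_simps)
  also have "\<dots> = kron (A * B) (C * E) $$ (i, j)"
    using i j assms kron_index_bounds[OF i] kron_index_bounds[OF j]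
    by (auto simp: kron_def scalar_prod_def)
  finally show "(kron A C * kron B E) $$ (i, j) = kron (A * B) (C * E) $$ (i, j)" .
qed (use assms in \<open>auto simp: kron_def\<close>)

lemma kron_smult:
  assumes "A \<in> carrier_mat N N" "B \<in> carrier_mat N N"
  shows "kron (a \<cdot>\<^sub>m A) (b \<cdot>\<^sub>m B) = (a * b) \<cdot>\<^sub>m kron A B"
proof (rule eq_matI)
  fix i j assume "i < dim_row ((a * b) \<cdot>\<^sub>m kron A B)" "j < dim_col ((a * b) \<cdot>\<^sub>m kron A B)"
  then have i: "i < N * N" and j: "j < N * N"
    using assms by (auto simp: kron_def)
  show "kron (a \<cdot>\<^sub>m A) (b \<cdot>\<^sub>m B) $$ (i, j) = ((a * b) \<cdot>\<^sub>m kron A B) $$ (i, j)"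
    using i j assms kron_index_bounds[OF i] kron_index_bounds[OF j] by (auto simp: kron_def)
qed (use assms in \<open>auto simp: kron_def\<close>)

lemma kron_one: "kron (1\<^sub>m N) (1\<^sub>m N) = 1\<^sub>m (N * N)"
proof (rule eq_matI)
  fix i j assume "i < dim_row (1\<^sub>m (N * N))" "j < dim_col (1\<^sub>m (N * N))"
  then have i: "i < N * N" and j: "j < N * N" by auto
  have "(i div N = j div N \<and> i mod N = j mod N) = (i = j)"
    by (metis div_mult_mod_eq)
  then show "kron (1\<^sub>m N) (1\<^sub>m N) $$ (i, j) = 1\<^sub>m (N * N) $$ (i, j)"
    using i j kron_index_bounds[OF i] kron_index_bounds[OF j] by (auto simp: kron_def)
qed (auto simp: kron_def)

lemma kron_foldr_mult:
  assumes "\<And>p. p \<in> set xs \<Longrightarrow> X p \<in> carrier_mat N N" "A \<in> carrier_mat N N" "B \<in> carrier_mat N N"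
  shows "kron (foldr (\<lambda>p M. X p * M) xs A) (foldr (\<lambda>p M. X p * M) xs B)
    = foldr (\<lambda>p M. kron (X p) (X p) * M) xs (kron A B)"
  using assms
proof (induction xs)
  case (Cons x xs)
  then have "kron (X x * foldr (\<lambda>p M. X p * M) xs A) (X x * foldr (\<lambda>p M. X p * M) xs B)
      = kron (X x) (X x) * kron (foldr (\<lambda>p M. X p * M) xs A) (foldr (\<lambda>p M. X p * M) xs B)"
    by (intro kron_mult[symmetric, of _ N] carrier_foldr_mult) auto
  then show ?case
    using Cons by simp
qed simp

section \<open>The commuting involutions \<open>c\<^sub>p \<otimes> c\<^sub>p\<close>\<close>

text \<open>Indices \<open>p \<ge> 2n\<close> are padded with the identity, so that the family is total.\<close>

definition majorana_pair :: "nat \<Rightarrow> nat \<Rightarrow> complex mat" where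
  "majorana_pair n p = (if p < 2 * n then kron (majorana n p) (majorana n p) else 1\<^sub>m (2 ^ n * 2 ^ n))"

lemma carrier_majorana_pair [simp]: "majorana_pair n p \<in> carrier_mat (2 ^ n * 2 ^ n) (2 ^ n * 2 ^ n)"
  by (simp add: majorana_pair_def)

lemma majorana_pair_square: "majorana_pair n p * majorana_pair n p = 1\<^sub>m (2 ^ n * 2 ^ n)"
proof (cases "p < 2 * n")
  case True
  then have "majorana_pair n p * majorana_pair n p
      = kron (majorana n p * majorana n p) (majorana n p * majorana n p)"
    by (simp add: majorana_pair_def kron_mult[of _ "2 ^ n"])
  then show ?thesis
    using True by (simp add: majorana_square kron_one)
qed (simp add: majorana_pair_def)

lemma majorana_pair_comm: "majorana_pair n p * majorana_pair n q = majorana_pair n q * majorana_pair n p"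
proof (cases "p < 2 * n \<and> q < 2 * n \<and> p \<noteq> q")
  case True
  then have p: "p < 2 * n" and q: "q < 2 * n" and "p \<noteq> q" by auto
  let ?c = "majorana n"
  have "majorana_pair n p * majorana_pair n q = kron (?c p * ?c q) (?c p * ?c q)"
    using p q by (simp add: majorana_pair_def kron_mult[of _ "2 ^ n"])
  also have "\<dots> = ((-1) * (-1)) \<cdot>\<^sub>m kron (?c q * ?c p) (?c q * ?c p)"
    unfolding majorana_anticomm[OF p q \<open>p \<noteq> q\<close>] using p q
    by (intro kron_smult[of _ "2 ^ n"]) auto
  also have "\<dots> = majorana_pair n q * majorana_pair n p"
    using p q by (auto simp: majorana_pair_def kron_mult[of _ "2 ^ n"] intro!: eq_matI)
  finally show ?thesis .
next
  case False
  then have "p = q \<or> majorana_pair n p = 1\<^sub>m (2 ^ n * 2 ^ n) \<or> majorana_pair n q = 1\<^sub>m (2 ^ n * 2 ^ n)"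
    by (auto simp: majorana_pair_def)
  then show ?thesis
    by (auto simp: left_mult_one_mat[OF carrier_majorana_pair] right_mult_one_mat[OF carrier_majorana_pair])
qed

interpretation majorana_pairs: commuting_involutions "2 ^ n * 2 ^ n" "majorana_pair n" for n
  by unfold_locales (simp_all add: majorana_pair_comm majorana_pair_square)

lemma kron_cmono:
  "kron (cmono n a) (cmono n a) = subset_prod_mat (2 ^ n * 2 ^ n) (majorana_pair n) (2 * n) a"
proof -
  have "kron (cmono n a) (cmono n a) = foldr (\<lambda>p M. kron (if a ! p then majorana n p else 1\<^sub>m (2 ^ n))
      (if a ! p then majorana n p else 1\<^sub>m (2 ^ n)) * M) [0..<2 * n] (kron (1\<^sub>m (2 ^ n)) (1\<^sub>m (2 ^ n)))"
    unfolding cmono_def by (rule kron_foldr_mult[of _ _ "2 ^ n"]) auto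
  also have "\<dots> = subset_prod_mat (2 ^ n * 2 ^ n) (majorana_pair n) (2 * n) a"
    unfolding subset_prod_mat_def kron_one
    by (rule foldr_cong) (auto simp: majorana_pair_def kron_one)
  finally show ?thesis .
qed

lemma four_power: "(4 :: nat) ^ n = 2 ^ n * 2 ^ n"
  by (simp flip: power_mult_distrib)

lemma Lambda_eq_sum: "Lambda n = family_sum_mat (2 ^ n * 2 ^ n) (majorana_pair n) (2 * n)"
proof -
  have "foldr (\<lambda>p M. kron (majorana n p) (majorana n p) + M) [0..<m] B
      = family_sum_mat (2 ^ n * 2 ^ n) (majorana_pair n) m + B"
    if "B \<in> carrier_mat (2 ^ n * 2 ^ n) (2 ^ n * 2 ^ n)" "m \<le> 2 * n" for m B
    using that
  proof (induction m arbitrary: B)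
    case (Suc m)
    then have "kron (majorana n m) (majorana n m) = majorana_pair n m"
      by (simp add: majorana_pair_def)
    with Suc show ?case
      by (simp add: assoc_add_mat[of _ "2 ^ n * 2 ^ n" "2 ^ n * 2 ^ n"])
  qed simp
  then show ?thesis
    unfolding Lambda_def four_power by simp
qed

lemma mult_eq_zero_if_range_in_kernel:
  fixes A B :: "complex mat"
  assumes "A \<in> carrier_mat N N" "B \<in> carrier_mat N N" "range_op N A \<subseteq> kernel_op N B"
  shows "B * A = 0\<^sub>m N N"
proof (rule eq_matI)
  fix i j assume "i < dim_row (0\<^sub>m N N :: complex mat)" "j < dim_col (0\<^sub>m N N :: complex mat)"
  then have i: "i < N" and j: "j < N" by auto
  have "A *\<^sub>v unit_vec N j \<in> range_op N A"
    unfolding range_op_def by auto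
  then have "B *\<^sub>v (A *\<^sub>v unit_vec N j) = 0\<^sub>v N"
    using assms unfolding kernel_op_def by auto
  then have "((B * A) *\<^sub>v unit_vec N j) $ i = 0"
    using assms i by simp
  moreover have "((B * A) *\<^sub>v unit_vec N j) $ i = (B * A) $$ (i, j)"
    using assms i j by (simp del: assoc_mult_mat_vec)
  ultimately show "(B * A) $$ (i, j) = 0\<^sub>m N N $$ (i, j)"
    using i j by simp
qed (use assms in auto)

theorem proposition2:
  fixes n :: nat
  shows "\<exists>F :: nat \<Rightarrow> real. \<forall>\<rho> :: complex mat.
     density_op (4 ^ n) \<rho> \<and> range_op (4 ^ n) \<rho> \<subseteq> kernel_op (4 ^ n) (Lambda n) \<longrightarrow>
     (\<forall>k \<le> 2 * n. (\<Sum>a \<in> {a. length a = 2 * n \<and> hamming a = k}. rho_coeff n \<rho> a a) = complex_of_real (F k))"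
proof (intro exI[of _ "\<lambda>k. kernel_elem_sym n k / 2 ^ (2 * n)"] allI impI)
  fix \<rho> :: "complex mat" and k :: nat
  assume H: "density_op (4 ^ n) \<rho> \<and> range_op (4 ^ n) \<rho> \<subseteq> kernel_op (4 ^ n) (Lambda n)"
  let ?N = "2 ^ n * 2 ^ n" and ?Z = "majorana_pair n"
  let ?S = "{a. length a = 2 * n \<and> hamming a = k}"
  have \<rho>: "\<rho> \<in> carrier_mat ?N ?N" and trace: "mtrace \<rho> = 1"
    using H unfolding density_op_def four_power by auto
  have kernel: "family_sum_mat ?N ?Z (2 * n) * \<rho> = 0\<^sub>m ?N ?N"
    using H \<rho> unfolding four_power Lambda_eq_sum by (simp add: mult_eq_zero_if_range_in_kernel)
  have "(\<Sum>a \<in> ?S. rho_coeff n \<rho> a a) = (\<Sum>a \<in> ?S. mtrace (\<rho> * subset_prod_mat ?N ?Z (2 * n) a)) / 2 ^ (2 * n)"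
    by (simp add: rho_coeff_def kron_cmono sum_divide_distrib)
  also have "\<dots> = mtrace (\<rho> * elem_sym_mat ?N ?Z (2 * n) (int k)) / 2 ^ (2 * n)"
    using majorana_pairs.sum_mtrace_subset_prod[OF \<rho>, of "2 * n" "int k"] by simp
  also have "\<dots> = mtrace (elem_sym_mat ?N ?Z (2 * n) (int k) * \<rho>) / 2 ^ (2 * n)"
    by (simp add: mtrace_mult_comm[OF \<rho>])
  also have "\<dots> = complex_of_real (kernel_elem_sym n k / 2 ^ (2 * n))"
    using \<rho> trace by (simp add: majorana_pairs.elem_sym_on_kernel[OF \<rho> kernel] mtrace_smult)
  finally show "(\<Sum>a \<in> ?S. rho_coeff n \<rho> a a) = complex_of_real (kernel_elem_sym n k / 2 ^ (2 * n))" .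
qed

end
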